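(* Let $\lambda>1$ and let $D_U,D_V$ be the $n\times n$ symmetric matrices $D_U=W_2^{-1}-W_2^{-1}B-B^TW_2^{-1}+B^TW_2^{-1}B$, $D_V=W_1^{-1}-A^TW_1^{-1}-W_1^{-1}A$, where $A=K_V^0(I+\Sigma_2)^{-1}$, $W_1=K_V^0-K_V^0(I+\Sigma_2)^{-1}K_V^0$, $B=K_U^0(K_U^0+\Sigma_1)^{-1}$, $W_2=K_U^0-K_U^0(K_U^0+\Sigma_1)^{-1}K_U^0$ for given symmetric positive definite $K_U^0,K_V^0,\Sigma_1,\Sigma_2$ with $K_U^0+K_V^0=I$. Consider the problem $$(\mathrm P)\quad\max_{\tilde q}\ \int\tilde q(u)\Big(-\tfrac12u^TD_Uu-\ln\tilde q(u)\Big)du+\lambda\int\tilde q(v)\Big(-\tfrac12v^TD_Vv-\ln\tilde q(v)\Big)dv\quad\text{s.t. } \mathbb E_{\tilde q(u,v)}[UU^T+VV^T]=I$$ over joint pdfs $\tilde q(u,v)$. Suppose an optimal solution of $(\mathrm P)$ has marginals $U\sim\mathcal N(0,K_U)$, $V\sim\mathcal N(0,K_V)$ with $K_U,K_V\succ0$ and $K_U+K_V=I$. Then $(K_U,K_V)$ is optimal for $$\max_{K_U,K_V\succ0}\ -\mathrm{tr}(D_UK_U)-\lambda\,\mathrm{tr}(D_VK_V)+\ln|K_U|+\lambda\ln|K_V|\quad\text{s.t. } K_U+K_V=I.$$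
   Context: $|M|$ denotes the determinant; $M\succ0$ means positive definite. *)

theory Defs
  imports "HOL-Analysis.Analysis"
begin

definition posdef :: "real^'n^'n \<Rightarrow> bool" where
  "posdef M \<longleftrightarrow> transpose M = M \<and> (\<forall>x. x \<noteq> 0 \<longrightarrow> 0 < x \<bullet> (M *v x))"

definition margU :: "((real^'n) \<times> (real^'n) \<Rightarrow> real) \<Rightarrow> real^'n \<Rightarrow> real" where
  "margU f u = (\<integral>v. f (u, v) \<partial>lborel)"

definition margV :: "((real^'n) \<times> (real^'n) \<Rightarrow> real) \<Rightarrow> real^'n \<Rightarrow> real" where
  "margV f v = (\<integral>u. f (u, v) \<partial>lborel)"

definition ent_integrand :: "real^'n^'n \<Rightarrow> (real^'n \<Rightarrow> real) \<Rightarrow> real^'n \<Rightarrow> real" where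
  "ent_integrand D q u = q u * (- (u \<bullet> (D *v u)) / 2 - ln (q u))"

definition ent_term :: "real^'n^'n \<Rightarrow> (real^'n \<Rightarrow> real) \<Rightarrow> real" where
  "ent_term D q = (\<integral>u. ent_integrand D q u \<partial>lborel)"

definition P_obj :: "real \<Rightarrow> real^'n^'n \<Rightarrow> real^'n^'n \<Rightarrow> ((real^'n) \<times> (real^'n) \<Rightarrow> real) \<Rightarrow> real" where
  "P_obj lam DU DV f = ent_term DU (margU f) + lam * ent_term DV (margV f)"

definition P_feasible :: "real^'n^'n \<Rightarrow> real^'n^'n \<Rightarrow> ((real^'n) \<times> (real^'n) \<Rightarrow> real) \<Rightarrow> bool" where
  "P_feasible DU DV f \<longleftrightarrow>
     f \<in> borel_measurable lborel \<and> (\<forall>z. 0 \<le> f z) \<and>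
     integrable lborel f \<and> (\<integral>z. f z \<partial>lborel) = 1 \<and>
     (\<forall>i j. integrable lborel (\<lambda>(u, v). f (u, v) * (u$i * u$j + v$i * v$j)) \<and>
            (\<integral>(u, v). f (u, v) * (u$i * u$j + v$i * v$j) \<partial>lborel) = (if i = j then 1 else 0)) \<and>
     integrable lborel (ent_integrand DU (margU f)) \<and>
     integrable lborel (ent_integrand DV (margV f))"

definition gauss_density :: "real^'n^'n \<Rightarrow> real^'n \<Rightarrow> real" where
  "gauss_density K u =
     exp (- (u \<bullet> (matrix_inv K *v u)) / 2) / sqrt ((2 * pi) ^ CARD('n) * det K)"

definition K_obj :: "real \<Rightarrow> real^'n^'n \<Rightarrow> real^'n^'n \<Rightarrow> real^'n^'n \<Rightarrow> real^'n^'n \<Rightarrow> real" where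
  "K_obj lam DU DV KU KV =
     - trace (DU ** KU) - lam * trace (DV ** KV) + ln (det KU) + lam * ln (det KV)"

end

theory Submission
  imports Defs "HOL-Probability.Probability"
begin

text \<open>
  For a centred Gaussian density with covariance \<open>K\<close>, the entropy-type term equals
  \<open>(- tr (D K) + n + ln ((2\<pi>)\<^sup>n |K|)) / 2\<close>. Hence every feasible density of (P) with Gaussian
  marginals \<open>N(0,K\<^sub>U)\<close>, \<open>N(0,K\<^sub>V)\<close> has objective value equal to half the matrix objective at
  \<open>(K\<^sub>U, K\<^sub>V)\<close> plus a constant. Conversely, for any competitor \<open>(K\<^sub>U', K\<^sub>V')\<close> with
  \<open>K\<^sub>U' + K\<^sub>V' = I\<close>, the product of the densities of \<open>N(0,K\<^sub>U')\<close> and \<open>N(0,K\<^sub>V')\<close> is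
  feasible for (P), since its second moment is \<open>K\<^sub>U' + K\<^sub>V' = I\<close>. So optimality in (P) transfers
  to the matrix problem.

  The Gaussian integrals are computed by writing \<open>K\<^sup>-\<^sup>1 = N\<^sup>T N\<close> (Gram--Schmidt in the inner product
  given by \<open>K\<close>) and substituting \<open>x \<mapsto> N x\<close>, which turns \<open>N(0,K)\<close> into a product of
  one-dimensional standard normal densities.
\<close>

lemma matrix_inv_inverse:
  fixes A :: "'a::field^'n^'n"
  assumes "det A \<noteq> 0"
  shows "A ** matrix_inv A = mat 1" "matrix_inv A ** A = mat 1"
proof -
  have "\<exists>A'. A ** A' = mat 1 \<and> A' ** A = mat 1"
    using assms invertible_det_nz unfolding invertible_def by blast
  then have "A ** matrix_inv A = mat 1 \<and> matrix_inv A ** A = mat 1"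
    unfolding matrix_inv_def by (rule someI_ex)
  then show "A ** matrix_inv A = mat 1" "matrix_inv A ** A = mat 1"
    by auto
qed

lemma matrix_inv_eqI:
  fixes A B :: "'a::field^'n^'n"
  assumes AB: "A ** B = mat 1"
  shows "matrix_inv A = B"
proof -
  have "det A \<noteq> 0"
    using det_mul[of A B] AB by auto
  have "matrix_inv A = matrix_inv A ** (A ** B)"
    by (simp add: AB)
  also have "\<dots> = (matrix_inv A ** A) ** B"
    by (simp add: matrix_mul_assoc)
  also have "\<dots> = B"
    by (simp add: matrix_inv_inverse(2)[OF \<open>det A \<noteq> 0\<close>])
  finally show ?thesis .
qed

lemma det_matrix_inv:
  fixes A :: "'a::field^'n^'n"
  assumes "det A \<noteq> 0"
  shows "det (matrix_inv A) = 1 / det A"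
  using det_mul[of A "matrix_inv A"] matrix_inv_inverse(1)[OF assms] assms
  by (simp add: field_simps)

section \<open>Linear change of variables on \<open>real^'n\<close>\<close>

lemma prod_Basis_vec:
  "(\<Prod>b\<in>(Basis :: (real^'n) set). f b) = (\<Prod>i\<in>UNIV. f (axis i 1))"
proof -
  have "inj (\<lambda>i::'n. axis i (1::real))"
    by (auto simp: inj_def axis_eq_axis)
  moreover have "(Basis :: (real^'n) set) = range (\<lambda>i. axis i 1)"
    by (auto simp: Basis_vec_def)
  ultimately show ?thesis
    by (metis prod.reindex comp_apply prod.cong)
qed

lemma matrix_vector_mult_linear_measurable:
  "(\<lambda>x. (N :: real^'n^'m) *v x) \<in> borel_measurable borel"
  by (intro borel_measurable_continuous_onI linear_continuous_on matrix_vector_mul_bounded_linear)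

text \<open>
  The linear change of variables of HOL-Analysis (\<open>measure_linear_image\<close>) requires a well-ordered
  index type. It is transferred to an arbitrary finite index type \<open>'n\<close> through a well-ordered copy
  of \<open>'n\<close>, relabelling coordinates.
\<close>

typedef 'a wellordered = "UNIV :: 'a set"
  morphisms of_wellordered to_wellordered by simp

instance wellordered :: (finite) finite
proof
  have "(UNIV :: 'a wellordered set) = range to_wellordered"
    by (metis surj_def to_wellordered_cases)
  moreover have "finite (range (to_wellordered :: 'a \<Rightarrow> 'a wellordered))"
    by simp
  ultimately show "finite (UNIV :: 'a wellordered set)"
    by simp
qed

instantiation wellordered :: (finite) linorder
begin

definition less_eq_wellordered :: "'a wellordered \<Rightarrow> 'a wellordered \<Rightarrow> bool"
  where "x \<le> y \<longleftrightarrow> to_nat (of_wellordered x) \<le> to_nat (of_wellordered y)"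

definition less_wellordered :: "'a wellordered \<Rightarrow> 'a wellordered \<Rightarrow> bool"
  where "x < y \<longleftrightarrow> to_nat (of_wellordered x) < to_nat (of_wellordered y)"

instance
  by standard (auto simp: less_eq_wellordered_def less_wellordered_def of_wellordered_inject)

end

instance wellordered :: (finite) wellorder
proof
  fix P :: "'a wellordered \<Rightarrow> bool" and x
  assume step: "\<And>x. (\<And>y. y < x \<Longrightarrow> P y) \<Longrightarrow> P x"
  have "\<forall>x. to_nat (of_wellordered x) = n \<longrightarrow> P x" for n
    by (induction n rule: less_induct) (use step in \<open>auto simp: less_wellordered_def\<close>)
  then show "P x"
    by blast
qed

lemma bij_of_wellordered: "bij of_wellordered"
  by (rule bij_betwI[of _ _ _ to_wellordered]) (auto simp: of_wellordered_inverse to_wellordered_inverse)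

lemma bij_to_wellordered: "bij to_wellordered"
  by (rule bij_betwI[of _ _ _ of_wellordered]) (auto simp: of_wellordered_inverse to_wellordered_inverse)

lemma distr_lborel_reindex:
  fixes r :: "'b::finite \<Rightarrow> 'a::finite"
  assumes r: "bij r"
  shows "distr lborel borel (\<lambda>x::real^'a. \<chi> j. x $ r j) = (lborel :: (real^'b) measure)"
proof (rule lborel_eqI[symmetric])
  let ?P = "\<lambda>x::real^'a. \<chi> j. x $ r j"
  fix l u :: "real^'b"
  assume le_Basis: "\<And>b. b \<in> Basis \<Longrightarrow> l \<bullet> b \<le> u \<bullet> b"
  have le: "l $ j \<le> u $ j" for j
    using le_Basis[of "axis j 1"] by (simp add: inner_axis)
  have inv_r: "r (inv r i) = i" "inv r (r j) = j" for i j
    using r by (auto simp: bij_def surj_f_inv_f inv_f_f)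
  have "?P -` box l u = box (\<chi> i. l $ inv r i) (\<chi> i. u $ inv r i)"
    by (auto simp: mem_box_cart) (metis inv_r)+
  moreover have "(\<Prod>i\<in>UNIV. u $ inv r i - l $ inv r i) = (\<Prod>j\<in>UNIV. u $ j - l $ j)"
    using bij_imp_bij_inv[OF r] by (rule prod.reindex_bij_betw)
  moreover have "\<forall>b\<in>Basis. (\<chi> i. l $ inv r i) \<bullet> b \<le> (\<chi> i. u $ inv r i) \<bullet> b"
    using le by (auto simp: Basis_vec_def inner_axis)
  moreover have "?P \<in> borel_measurable borel"
    by (intro borel_measurable_continuous_onI continuous_on_vec_lambda continuous_intros)
  ultimately show "emeasure (distr lborel borel ?P) (box l u) = (\<Prod>b\<in>Basis. (u - l) \<bullet> b)"
    using le by (simp add: emeasure_distr emeasure_lborel_box_eq prod_Basis_vec inner_axis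
        cart_eq_inner_axis[symmetric])
qed simp

lemma det_reindex:
  fixes r :: "'b::finite \<Rightarrow> 'a::finite" and A :: "'c::comm_ring_1^'a^'a"
  assumes r: "bij r"
  shows "det (\<chi> i j. A $ r i $ r j) = det A"
proof -
  have inv_r: "r (inv r i) = i" "inv r (r j) = j" for i j
    using r by (auto simp: bij_def surj_f_inv_f inv_f_f)
  let ?conj = "\<lambda>q. r \<circ> q \<circ> inv r"
  have permutes_iff_bij: "p permutes UNIV \<longleftrightarrow> bij p" for p :: "'d \<Rightarrow> 'd"
    using bij_imp_permutes permutes_bij by blast
  have conj_bij: "bij_betw ?conj {q. q permutes (UNIV :: 'b set)} {p. p permutes (UNIV :: 'a set)}"
  proof (rule bij_betw_byWitness[where f' = "\<lambda>p. inv r \<circ> p \<circ> r"])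
    show "?conj ` {q. q permutes UNIV} \<subseteq> {p. p permutes UNIV}"
      "(\<lambda>p. inv r \<circ> p \<circ> r) ` {p. p permutes UNIV} \<subseteq> {q. q permutes UNIV}"
      using r by (auto simp: permutes_iff_bij intro!: bij_comp bij_imp_bij_inv)
  qed (auto simp: fun_eq_iff inv_r)
  have sign_conj: "sign (?conj q) = sign q" if q: "q permutes (UNIV :: 'b set)" for q
  proof -
    interpret permutes_bij_finite q UNIV UNIV r "inv r" "?conj q"
      by unfold_locales (use q r inv_r in \<open>auto simp: bij_betw_def fun_eq_iff intro!: eq_reflection\<close>)
    show ?thesis
      using sign_p' by simp
  qed
  have prod_conj: "(\<Prod>i\<in>UNIV. A $ r i $ r (q i)) = (\<Prod>j\<in>UNIV. A $ j $ ?conj q j)" for q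
    using prod.reindex_bij_betw[OF r, of "\<lambda>j. A $ j $ ?conj q j"] by (simp add: inv_r)
  have "det (\<chi> i j. A $ r i $ r j) =
      (\<Sum>q | q permutes (UNIV :: 'b set). of_int (sign (?conj q)) * (\<Prod>j\<in>UNIV. A $ j $ ?conj q j))"
    unfolding det_def by (intro sum.cong) (auto simp: sign_conj prod_conj)
  also have "\<dots> = det A"
    unfolding det_def by (rule sum.reindex_bij_betw[OF conj_bij])
  finally show ?thesis .
qed

lemma matrix_vector_mult_reindex:
  fixes r :: "'b::finite \<Rightarrow> 'a::finite" and N :: "'c::semiring_1^'a^'a"
  assumes r: "bij r"
  shows "(\<chi> i j. N $ r i $ r j) *v (\<chi> j. x $ r j) = (\<chi> j. (N *v x) $ r j)"
proof -
  have "(\<Sum>j\<in>UNIV. N $ r i $ r j * x $ r j) = (\<Sum>k\<in>UNIV. N $ r i $ k * x $ k)" for i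
    using r by (rule sum.reindex_bij_betw)
  then show ?thesis
    by (simp add: vec_eq_iff matrix_vector_mult_def)
qed

lemma lborel_eq_density_linear_wellorder:
  fixes N :: "real^('m::{finite,wellorder})^('m::{finite,wellorder})"
  assumes dN: "det N \<noteq> 0"
  shows "lborel = density (distr lborel borel (\<lambda>x. N *v x)) (\<lambda>_. ennreal \<bar>det N\<bar>)"
proof (rule lborel_eqI)
  let ?f = "\<lambda>x. N *v x"
  let ?g = "\<lambda>x. matrix_inv N *v x"
  fix l u :: "real^('m::{finite,wellorder})"
  assume le: "\<And>b. b \<in> Basis \<Longrightarrow> l \<bullet> b \<le> u \<bullet> b"
  have vimage_eq: "?f -` box l u = ?g ` box l u"
    by (force simp: matrix_vector_mul_assoc matrix_inv_inverse[OF dN])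
  have borel: "?g ` box l u \<in> sets borel"
    using measurable_sets[OF matrix_vector_mult_linear_measurable, of "box l u" N]
    by (simp add: vimage_eq)
  have "bounded (?g ` box l u)"
    by (intro bounded_linear_image matrix_vector_mul_bounded_linear bounded_box)
  then have "emeasure lborel (?f -` box l u) = measure lborel (?g ` box l u)"
    unfolding vimage_eq by (intro emeasure_eq_ennreal_measure) (auto dest: emeasure_bounded_finite)
  also have "measure lborel (?g ` box l u) = \<bar>det (matrix_inv N)\<bar> * measure lborel (box l u)"
    using measure_linear_image[OF matrix_vector_mul_linear, of "box l u" "matrix_inv N"] borel
    by simp
  finally have "emeasure lborel (?f -` box l u) = \<bar>1 / det N\<bar> * measure lborel (box l u)"
    by (simp add: det_matrix_inv[OF dN])
  then have "emeasure (density (distr lborel borel ?f) (\<lambda>_. ennreal \<bar>det N\<bar>)) (box l u)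
      = measure lborel (box l u)"
    using dN by (simp add: emeasure_density_const emeasure_distr matrix_vector_mult_linear_measurable
        ennreal_mult'[symmetric] abs_mult[symmetric])
  then show "emeasure (density (distr lborel borel ?f) (\<lambda>_. ennreal \<bar>det N\<bar>)) (box l u)
      = (\<Prod>b\<in>Basis. (u - l) \<bullet> b)"
    using le by (simp add: measure_lborel_box_eq)
qed simp

lemma emeasure_lborel_linear_vimage:
  fixes N :: "real^'n^'n"
  assumes dN: "det N \<noteq> 0" and B: "B \<in> sets borel"
  shows "emeasure lborel B = ennreal \<bar>det N\<bar> * emeasure lborel ((\<lambda>x. N *v x) -` B)"
proof -
  let ?S = "\<lambda>y::real^'n wellordered. \<chi> i. y $ to_wellordered i"
  let ?N' = "\<chi> i j. N $ of_wellordered i $ of_wellordered j :: real^'n wellordered^'n wellordered"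
  let ?f = "\<lambda>x. N *v x"
  let ?f' = "\<lambda>y. ?N' *v y"
  have S_meas: "?S \<in> borel_measurable borel"
    by (intro borel_measurable_continuous_onI continuous_on_vec_lambda continuous_intros)
  have S_vimage: "emeasure lborel X = emeasure lborel (?S -` X)" if "X \<in> sets borel" for X
  proof -
    have "emeasure lborel X = emeasure (distr lborel borel ?S) X"
      by (simp only: distr_lborel_reindex[OF bij_to_wellordered])
    also have "\<dots> = emeasure lborel (?S -` X)"
      using that S_meas by (simp add: emeasure_distr)
    finally show ?thesis .
  qed
  have "(\<chi> i j. ?N' $ to_wellordered i $ to_wellordered j :: real^'n^'n) = N"
    by (simp add: vec_eq_iff to_wellordered_inverse)
  then have S_f': "?S (?f' y) = ?f (?S y)" for y
    using matrix_vector_mult_reindex[OF bij_to_wellordered, of ?N' y] by simp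
  have "emeasure lborel B = emeasure lborel (?S -` B)"
    using S_vimage[OF B] .
  also have "\<dots> = emeasure (density (distr lborel borel ?f') (\<lambda>_. ennreal \<bar>det ?N'\<bar>)) (?S -` B)"
    using lborel_eq_density_linear_wellorder[of ?N'] dN det_reindex[OF bij_of_wellordered, of N]
    by simp
  also have "\<dots> = ennreal \<bar>det N\<bar> * emeasure lborel (?f' -` (?S -` B))"
    using measurable_sets[OF S_meas B] det_reindex[OF bij_of_wellordered, of N]
    by (simp add: emeasure_density_const emeasure_distr matrix_vector_mult_linear_measurable)
  also have "?f' -` (?S -` B) = ?S -` (?f -` B)"
    using S_f' by auto
  also have "emeasure lborel (?S -` (?f -` B)) = emeasure lborel (?f -` B)"
    using S_vimage[OF measurable_sets[OF matrix_vector_mult_linear_measurable B]] by simp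
  finally show ?thesis .
qed

lemma lborel_eq_density_linear:
  fixes N :: "real^'n^'n"
  assumes dN: "det N \<noteq> 0"
  shows "lborel = density (distr lborel borel (\<lambda>x. N *v x)) (\<lambda>_. ennreal \<bar>det N\<bar>)"
proof (rule measure_eqI)
  fix B :: "(real^'n) set"
  assume "B \<in> sets lborel"
  then show "emeasure lborel B =
      emeasure (density (distr lborel borel (\<lambda>x. N *v x)) (\<lambda>_. ennreal \<bar>det N\<bar>)) B"
    using emeasure_lborel_linear_vimage[OF dN, of B]
    by (simp add: emeasure_density_const emeasure_distr matrix_vector_mult_linear_measurable)
qed simp

lemma
  fixes N :: "real^'n^'n" and h :: "real^'n \<Rightarrow> real"
  assumes dN: "det N \<noteq> 0" and h_meas: "h \<in> borel_measurable borel"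
  shows integrable_linear_change_iff:
      "integrable lborel h \<longleftrightarrow> integrable lborel (\<lambda>x. \<bar>det N\<bar> * h (N *v x))"
    and integral_linear_change:
      "integral\<^sup>L lborel h = (\<integral>x. \<bar>det N\<bar> * h (N *v x) \<partial>lborel)"
proof -
  let ?f = "\<lambda>x. N *v x"
  have f_meas: "?f \<in> measurable lborel borel"
    using matrix_vector_mult_linear_measurable by simp
  have "integrable lborel h \<longleftrightarrow>
      integrable (density (distr lborel borel ?f) (\<lambda>_. ennreal \<bar>det N\<bar>)) h"
    using lborel_eq_density_linear[OF dN] by (rule arg_cong)
  also have "\<dots> \<longleftrightarrow> integrable (distr lborel borel ?f) (\<lambda>x. \<bar>det N\<bar> *\<^sub>R h x)"
    by (rule integrable_density) (use h_meas in auto)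
  also have "\<dots> \<longleftrightarrow> integrable lborel (\<lambda>x. \<bar>det N\<bar> *\<^sub>R h (?f x))"
    by (rule integrable_distr_eq[OF f_meas]) (use h_meas in auto)
  finally show "integrable lborel h \<longleftrightarrow> integrable lborel (\<lambda>x. \<bar>det N\<bar> * h (N *v x))"
    by simp
  have "integral\<^sup>L lborel h =
      integral\<^sup>L (density (distr lborel borel ?f) (\<lambda>_. ennreal \<bar>det N\<bar>)) h"
    using lborel_eq_density_linear[OF dN] by (rule arg_cong)
  also have "\<dots> = integral\<^sup>L (distr lborel borel ?f) (\<lambda>x. \<bar>det N\<bar> *\<^sub>R h x)"
    by (rule integral_density) (use h_meas in auto)
  also have "\<dots> = integral\<^sup>L lborel (\<lambda>x. \<bar>det N\<bar> *\<^sub>R h (?f x))"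
    by (rule integral_distr[OF f_meas]) (use h_meas in auto)
  finally show "integral\<^sup>L lborel h = (\<integral>x. \<bar>det N\<bar> * h (N *v x) \<partial>lborel)"
    by simp
qed

section \<open>The standard Gaussian density\<close>

lemma
  fixes g :: "'a::euclidean_space \<Rightarrow> real \<Rightarrow> real"
  assumes g: "\<And>b. b \<in> Basis \<Longrightarrow> integrable lborel (g b)"
  shows integrable_lborel_prod_Basis: "integrable lborel (\<lambda>x::'a. \<Prod>b\<in>Basis. g b (x \<bullet> b))"
    and integral_lborel_prod_Basis:
      "(\<integral>x. (\<Prod>b\<in>Basis. g b (x \<bullet> b)) \<partial>(lborel :: 'a measure)) =
        (\<Prod>b\<in>Basis. integral\<^sup>L lborel (g b))"
proof -
  interpret product_sigma_finite "\<lambda>_::'a. lborel :: real measure"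
    by standard
  let ?T = "\<lambda>f. \<Sum>b\<in>(Basis :: 'a set). f b *\<^sub>R b"
  let ?F = "\<lambda>x::'a. \<Prod>b\<in>Basis. g b (x \<bullet> b)"
  have T_meas: "?T \<in> measurable (\<Pi>\<^sub>M b\<in>Basis. lborel) borel"
    by measurable
  have F_meas: "?F \<in> borel_measurable borel"
    using g by measurable
  have F_T: "?F (?T f) = (\<Prod>b\<in>Basis. g b (f b))" for f
    by (intro prod.cong) simp_all
  have "integrable lborel ?F \<longleftrightarrow> integrable (distr (\<Pi>\<^sub>M b\<in>Basis. lborel) borel ?T) ?F"
    by (simp only: lborel_eq[symmetric])
  also have "\<dots> \<longleftrightarrow> integrable (\<Pi>\<^sub>M b\<in>Basis. lborel) (\<lambda>f. ?F (?T f))"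
    by (rule integrable_distr_eq[OF T_meas F_meas])
  finally show "integrable lborel ?F"
    unfolding F_T using g by (simp add: product_integrable_prod)
  have "integral\<^sup>L lborel ?F = integral\<^sup>L (distr (\<Pi>\<^sub>M b\<in>Basis. lborel) borel ?T) ?F"
    by (simp only: lborel_eq[symmetric])
  also have "\<dots> = integral\<^sup>L (\<Pi>\<^sub>M b\<in>Basis. lborel) (\<lambda>f. ?F (?T f))"
    by (rule integral_distr[OF T_meas F_meas])
  finally show "integral\<^sup>L lborel ?F = (\<Prod>b\<in>Basis. integral\<^sup>L lborel (g b))"
    unfolding F_T using g by (simp add: product_integral_prod)
qed

definition std_gauss_density :: "'a::euclidean_space \<Rightarrow> real" where
  "std_gauss_density x = (\<Prod>b\<in>Basis. std_normal_density (x \<bullet> b))"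

lemma std_gauss_density_eq:
  "std_gauss_density (x :: 'a::euclidean_space) = exp (- (x \<bullet> x) / 2) / sqrt (2 * pi) ^ DIM('a)"
proof -
  have "std_gauss_density x = (\<Prod>b\<in>Basis. exp (- (x \<bullet> b)\<^sup>2 / 2) / sqrt (2 * pi))"
    by (simp add: std_gauss_density_def std_normal_density_def)
  also have "\<dots> = exp (\<Sum>b\<in>Basis. - (x \<bullet> b)\<^sup>2 / 2) / sqrt (2 * pi) ^ DIM('a)"
    by (simp add: prod_dividef exp_sum)
  also have "(\<Sum>b\<in>Basis. - (x \<bullet> b)\<^sup>2 / 2) = - (x \<bullet> x) / 2"
    by (simp add: euclidean_inner[of x x] power2_eq_square sum_divide_distrib sum_negf)
  finally show ?thesis .
qed

lemma continuous_on_std_gauss_density: "continuous_on UNIV std_gauss_density"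
  unfolding std_gauss_density_eq[abs_def] by (intro continuous_intros) (use pi_gt_zero in auto)

lemma
  shows integrable_std_gauss_density: "integrable lborel (std_gauss_density :: 'a::euclidean_space \<Rightarrow> real)"
    and integral_std_gauss_density: "integral\<^sup>L lborel (std_gauss_density :: 'a::euclidean_space \<Rightarrow> real) = 1"
  using integrable_lborel_prod_Basis[of "\<lambda>_. std_normal_density"]
    integral_lborel_prod_Basis[of "\<lambda>_. std_normal_density"]
  by (simp_all add: std_gauss_density_def[abs_def])

lemma
  fixes a c :: "'a::euclidean_space"
  assumes "a \<in> Basis" "c \<in> Basis"
  shows integrable_std_gauss_density_moment:
      "integrable lborel (\<lambda>x::'a. std_gauss_density x * ((x \<bullet> a) * (x \<bullet> c)))"
    and integral_std_gauss_density_moment: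
      "(\<integral>x. std_gauss_density x * ((x \<bullet> a) * (x \<bullet> c)) \<partial>(lborel :: 'a measure)) =
        (if a = c then 1 else 0)"
proof -
  define g where "g b t = std_normal_density t * ((if b = a then t else 1) * (if b = c then t else 1))"
    for b t
  have prod_g: "(\<Prod>b\<in>Basis. g b (x \<bullet> b)) = std_gauss_density x * ((x \<bullet> a) * (x \<bullet> c))"
    for x :: 'a
    using assms by (simp add: g_def std_gauss_density_def prod.distrib prod.delta)
  have moment1: "integrable lborel (\<lambda>t. std_normal_density t * t)"
    using integrable_std_normal_moment[of 1] by simp
  have moment2: "integrable lborel (\<lambda>t. std_normal_density t * (t * t))"
    using integrable_std_normal_moment[of 2] by (simp add: power2_eq_square)
  have g_int: "integrable lborel (g b)" for b
    using moment1 moment2 by (cases "b = a"; cases "b = c") (auto simp: g_def[abs_def])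
  show "integrable lborel (\<lambda>x::'a. std_gauss_density x * ((x \<bullet> a) * (x \<bullet> c)))"
    using integrable_lborel_prod_Basis[of g, OF g_int] unfolding prod_g .
  have "(\<integral>x. std_gauss_density x * ((x \<bullet> a) * (x \<bullet> c)) \<partial>(lborel :: 'a measure)) =
      (\<Prod>b\<in>Basis. integral\<^sup>L lborel (g b))"
    using integral_lborel_prod_Basis[of g, OF g_int] unfolding prod_g .
  also have "\<dots> = (if a = c then 1 else 0)"
  proof (cases "a = c")
    case True
    have "integral\<^sup>L lborel (g b) = 1" for b
      using True integral_std_normal_moment_even[of 1]
      by (cases "b = a") (auto simp: g_def[abs_def] power2_eq_square)
    then show ?thesis
      using True by simp
  next
    case False
    have "integral\<^sup>L lborel (g a) = 0"
      using False integral_std_normal_moment_odd[of 0] by (simp add: g_def[abs_def])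
    then show ?thesis
      using False assms(1) by (simp add: prod_zero_iff) blast
  qed
  finally show "(\<integral>x. std_gauss_density x * ((x \<bullet> a) * (x \<bullet> c)) \<partial>(lborel :: 'a measure)) =
      (if a = c then 1 else 0)" .
qed

section \<open>Congruence of positive definite matrices to the identity\<close>

lemma basis_orthogonal_posdef:
  fixes K :: "real^'n^'n" and B :: "(real^'n) set"
  assumes K: "posdef K" and "finite B"
  shows "\<exists>C. finite C \<and> card C \<le> card B \<and> span C = span B \<and>
      (\<forall>x\<in>C. \<forall>y\<in>C. x \<noteq> y \<longrightarrow> x \<bullet> (K *v y) = 0)"
  using \<open>finite B\<close>
proof (induct rule: finite_induct)
  case empty
  then show ?case
    by (intro exI[of _ "{}"]) auto
next
  case (insert a B)
  have K_sym: "x \<bullet> (K *v y) = y \<bullet> (K *v x)" for x y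
    using K unfolding posdef_def by (metis dot_lmul_matrix inner_commute vector_transpose_matrix)
  have K_pos: "y \<noteq> 0 \<Longrightarrow> 0 < y \<bullet> (K *v y)" for y
    using K by (simp add: posdef_def)
  from insert obtain C where C: "finite C" "card C \<le> card B" "span C = span B"
    "\<forall>x\<in>C. \<forall>y\<in>C. x \<noteq> y \<longrightarrow> x \<bullet> (K *v y) = 0"
    by blast
  let ?a = "a - (\<Sum>x\<in>C. (x \<bullet> (K *v a) / (x \<bullet> (K *v x))) *\<^sub>R x)"
  have "card (insert ?a C) \<le> card (insert a B)"
    using C insert.hyps card_insert_if by fastforce
  moreover have "span (insert ?a C) = span (insert a B)"
  proof -
    have "x - k *\<^sub>R ?a \<in> span C \<longleftrightarrow> x - k *\<^sub>R a \<in> span C" for x k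
    proof -
      have eq: "x - k *\<^sub>R ?a =
          k *\<^sub>R (\<Sum>x\<in>C. (x \<bullet> (K *v a) / (x \<bullet> (K *v x))) *\<^sub>R x) + (x - k *\<^sub>R a)"
        by (simp add: algebra_simps)
      show ?thesis
        unfolding eq by (intro span_add_eq span_scale span_sum span_base)
    qed
    then show ?thesis
      unfolding set_eq_iff span_breakdown_eq C(3)[symmetric] by auto
  qed
  moreover have "?a \<bullet> (K *v y) = 0" if "y \<in> C" for y
  proof (cases "y = 0")
    case False
    have "(\<Sum>x\<in>C. (x \<bullet> (K *v a) / (x \<bullet> (K *v x))) * (x \<bullet> (K *v y))) = y \<bullet> (K *v a)"
      using C(1,4) that K_pos[OF False] by (subst sum.remove[of _ y]) (auto intro!: sum.neutral)
    then show ?thesis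
      by (simp add: inner_diff_left inner_sum_left K_sym[of a y])
  qed simp
  ultimately show ?case
    using C K_sym by (intro exI[of _ "insert ?a C"]) auto
qed

lemma transpose_mul_mul_nth:
  fixes M K :: "real^'n^'n"
  shows "(transpose M ** K ** M) $ i $ j = column i M \<bullet> (K *v column j M)"
proof -
  have "(transpose M ** K ** M) $ i $ j = (\<Sum>l\<in>UNIV. \<Sum>k\<in>UNIV. M$k$i * K$k$l * M$l$j)"
    by (simp add: matrix_matrix_mult_def transpose_def sum_distrib_right)
  also have "\<dots> = (\<Sum>k\<in>UNIV. \<Sum>l\<in>UNIV. M$k$i * K$k$l * M$l$j)"
    by (rule sum.swap)
  finally show ?thesis
    by (simp add: inner_vec_def matrix_vector_mult_def column_def sum_distrib_left mult.assoc)
qed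

lemma posdef_congruent_mat1:
  fixes K :: "real^'n^'n"
  assumes K: "posdef K"
  obtains M :: "real^'n^'n" where "transpose M ** K ** M = mat 1"
proof -
  obtain C where C: "finite C" "card C \<le> card (Basis :: (real^'n) set)" "span C = UNIV"
    "\<forall>x\<in>C. \<forall>y\<in>C. x \<noteq> y \<longrightarrow> x \<bullet> (K *v y) = 0"
    using basis_orthogonal_posdef[OF K, of Basis] by (auto simp: span_Basis)
  have "dim (UNIV :: (real^'n) set) \<le> card C"
    using C(1,3) by (intro span_card_ge_dim) auto
  then have "card C = card (UNIV :: 'n set)"
    using C(2) by simp
  moreover have "independent C"
    using card_eq_dim[of C UNIV] C(1,3) \<open>card C = card UNIV\<close> by simp
  ultimately obtain h where h: "bij_betw h (UNIV :: 'n set) C" and "0 \<notin> C"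
    using finite_same_card_bij[of UNIV C] C(1) dependent_zero by force
  then have h_pos: "0 < h i \<bullet> (K *v h i)" for i
    using K unfolding posdef_def by (metis bij_betwE UNIV_I)
  define M where "M = (\<chi> i j. h j $ i / sqrt (h j \<bullet> (K *v h j)))"
  have col: "column j M = (1 / sqrt (h j \<bullet> (K *v h j))) *\<^sub>R h j" for j
    by (simp add: M_def column_def vec_eq_iff)
  have "(transpose M ** K ** M) $ i $ j = mat 1 $ i $ j" for i j
  proof (cases "i = j")
    case True
    then show ?thesis
      using h_pos[of i]
      by (simp add: transpose_mul_mul_nth col matrix_vector_mult_scaleR mat_def real_sqrt_mult[symmetric])
  next
    case False
    then have "h i \<bullet> (K *v h j) = 0"
      using C(4) h by (metis bij_betw_iff_bijections UNIV_I)
    then show ?thesis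
      using False by (simp add: transpose_mul_mul_nth col matrix_vector_mult_scaleR mat_def)
  qed
  then have "transpose M ** K ** M = mat 1"
    by (simp add: vec_eq_iff)
  then show ?thesis
    by (rule that)
qed

section \<open>Centred Gaussian densities\<close>

lemma posdef_det_pos:
  fixes K :: "real^'n^'n"
  assumes "posdef K"
  shows "0 < det K"
proof -
  obtain M :: "real^'n^'n" where "transpose M ** K ** M = mat 1"
    using posdef_congruent_mat1[OF assms] .
  then have "det (transpose M ** K ** M) = 1"
    by simp
  then have "(det M)\<^sup>2 * det K = 1"
    by (simp add: det_mul det_transpose power2_eq_square mult_ac)
  then show ?thesis
    using zero_le_power2[of "det M"] mult_nonneg_nonpos[of "(det M)\<^sup>2" "det K"] by linarith
qed

lemma gauss_density_nonneg: "posdef K \<Longrightarrow> 0 \<le> gauss_density K x"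
  using posdef_det_pos[of K] by (simp add: gauss_density_def)

lemma gauss_density_eq_std_gauss_density:
  fixes K :: "real^'n^'n"
  assumes K: "posdef K"
  obtains N :: "real^'n^'n"
  where "det N \<noteq> 0"
    and "matrix_inv N ** transpose (matrix_inv N) = K"
    and "\<And>x. gauss_density K x = \<bar>det N\<bar> * std_gauss_density (N *v x)"
proof -
  obtain M :: "real^'n^'n" where M: "transpose M ** K ** M = mat 1"
    using posdef_congruent_mat1[OF K] .
  let ?N = "transpose M"
  let ?P = "matrix_inv ?N"
  have "(det M)\<^sup>2 * det K = 1"
    using arg_cong[OF M, of det] by (simp add: det_mul det_transpose power2_eq_square mult_ac)
  then have det_M: "det M \<noteq> 0"
    by auto
  then have det_K: "det K = 1 / (det M)\<^sup>2"
    using \<open>(det M)\<^sup>2 * det K = 1\<close> by (simp add: field_simps)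
  have "transpose M ** (K ** M) = mat 1"
    using M by (simp add: matrix_mul_assoc)
  then have "K ** (M ** transpose M) = mat 1"
    using matrix_left_right_inverse by (metis matrix_mul_assoc)
  then have "matrix_inv K = M ** transpose M"
    by (rule matrix_inv_eqI)
  then have quad: "x \<bullet> (matrix_inv K *v x) = (?N *v x) \<bullet> (?N *v x)" for x
    by (simp add: matrix_vector_mul_assoc[symmetric] dot_lmul_matrix[symmetric])
  have "sqrt (1 / (det M)\<^sup>2) = 1 / \<bar>det M\<bar>"
    by (simp only: real_sqrt_divide real_sqrt_one real_sqrt_abs)
  then have "sqrt ((2 * pi) ^ CARD('n) * det K) = sqrt (2 * pi) ^ CARD('n) / \<bar>det M\<bar>"
    by (simp only: det_K real_sqrt_mult real_sqrt_power) simp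
  then have gauss_eq: "gauss_density K x = \<bar>det ?N\<bar> * std_gauss_density (?N *v x)" for x
    unfolding gauss_density_def quad std_gauss_density_eq using det_M by simp
  have "?P ** transpose ?P = K"
  proof -
    have PN: "?P ** ?N = mat 1"
      using det_M by (simp add: matrix_inv_inverse)
    then have NP: "transpose ?N ** transpose ?P = mat 1"
      by (metis matrix_transpose_mul transpose_mat)
    have "K = (?P ** ?N) ** K ** (transpose ?N ** transpose ?P)"
      by (simp only: PN NP matrix_mul_lid matrix_mul_rid)
    also have "\<dots> = ?P ** (?N ** K ** transpose ?N) ** transpose ?P"
      by (simp add: matrix_mul_assoc)
    finally show ?thesis
      using M by simp
  qed
  then show ?thesis
    using det_M by (intro that[OF _ _ gauss_eq]) simp_all
qed

lemma
  fixes K :: "real^'n^'n"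
  assumes K: "posdef K"
  shows integrable_gauss_density: "integrable lborel (gauss_density K)"
    and integral_gauss_density: "integral\<^sup>L lborel (gauss_density K) = 1"
    and integrable_gauss_density_moment: "integrable lborel (\<lambda>x. gauss_density K x * (x$i * x$j))"
    and integral_gauss_density_moment: "(\<integral>x. gauss_density K x * (x$i * x$j) \<partial>lborel) = K$i$j"
proof -
  obtain N :: "real^'n^'n" where det_N: "det N \<noteq> 0"
    and K_eq: "matrix_inv N ** transpose (matrix_inv N) = K"
    and gauss_eq: "\<And>x. gauss_density K x = \<bar>det N\<bar> * std_gauss_density (N *v x)"
    using gauss_density_eq_std_gauss_density[OF K] by blast
  have std_meas: "std_gauss_density \<in> borel_measurable borel"
    by (rule borel_measurable_continuous_onI[OF continuous_on_std_gauss_density])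
  have gauss_fun_eq: "gauss_density K = (\<lambda>x. \<bar>det N\<bar> * std_gauss_density (N *v x))"
    using gauss_eq by blast
  show "integrable lborel (gauss_density K)"
    unfolding gauss_fun_eq
    using integrable_linear_change_iff[OF det_N std_meas] integrable_std_gauss_density by blast
  show "integral\<^sup>L lborel (gauss_density K) = 1"
    unfolding gauss_fun_eq
    using integral_linear_change[OF det_N std_meas] integral_std_gauss_density by metis
  let ?P = "matrix_inv N"
  define h where "h z = std_gauss_density z * ((?P *v z)$i * (?P *v z)$j)" for z :: "real^'n"
  have h_meas: "h \<in> borel_measurable borel"
    unfolding h_def[abs_def]
    by (intro borel_measurable_continuous_onI continuous_intros continuous_on_std_gauss_density
        linear_continuous_on matrix_vector_mul_bounded_linear)
  have h_N: "\<bar>det N\<bar> * h (N *v x) = gauss_density K x * (x$i * x$j)" for x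
    using det_N by (simp add: h_def gauss_eq matrix_vector_mul_assoc matrix_inv_inverse)
  have std_moment:
    "integrable lborel (\<lambda>z::real^'n. std_gauss_density z * (z$k * z$l))"
    "(\<integral>z. std_gauss_density z * (z$k * z$l) \<partial>(lborel :: (real^'n) measure)) = (if k = l then 1 else 0)"
    for k l
    using integrable_std_gauss_density_moment[of "axis k 1 :: real^'n" "axis l 1"]
      integral_std_gauss_density_moment[of "axis k 1 :: real^'n" "axis l 1"]
    by (simp_all add: inner_axis axis_eq_axis)
  have h_sum: "h z = (\<Sum>l\<in>UNIV. \<Sum>k\<in>UNIV. (?P$i$k * ?P$j$l) * (std_gauss_density z * (z$k * z$l)))"
    for z
    by (simp add: h_def matrix_vector_mult_def sum_product sum_distrib_left mult_ac)
  have h_int: "integrable lborel h"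
    unfolding h_sum[abs_def] by (intro Bochner_Integration.integrable_sum integrable_mult_right std_moment)
  have "integral\<^sup>L lborel h = (\<Sum>k\<in>UNIV. ?P$i$k * ?P$j$k)"
    unfolding h_sum[abs_def]
    by (simp add: Bochner_Integration.integral_sum Bochner_Integration.integrable_sum
        integrable_mult_right std_moment if_distrib cong: if_cong)
  also have "\<dots> = K$i$j"
    unfolding K_eq[symmetric] by (simp add: matrix_matrix_mult_def transpose_def)
  finally have h_integral: "integral\<^sup>L lborel h = K$i$j" .
  show "integrable lborel (\<lambda>x. gauss_density K x * (x$i * x$j))"
    using integrable_linear_change_iff[OF det_N h_meas] h_int by (simp add: h_N)
  show "(\<integral>x. gauss_density K x * (x$i * x$j) \<partial>lborel) = K$i$j"
    using integral_linear_change[OF det_N h_meas] h_integral by (simp add: h_N)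
qed

lemma
  fixes K D :: "real^'n^'n"
  assumes K: "posdef K"
  shows integrable_gauss_density_quadratic:
      "integrable lborel (\<lambda>x. gauss_density K x * (x \<bullet> (D *v x)))"
    and integral_gauss_density_quadratic:
      "(\<integral>x. gauss_density K x * (x \<bullet> (D *v x)) \<partial>lborel) = trace (D ** K)"
proof -
  have quad_eq: "gauss_density K x * (x \<bullet> (D *v x)) =
      (\<Sum>i\<in>UNIV. \<Sum>j\<in>UNIV. D$i$j * (gauss_density K x * (x$i * x$j)))" for x
    by (simp add: inner_vec_def matrix_vector_mult_def sum_distrib_left mult_ac)
  show "integrable lborel (\<lambda>x. gauss_density K x * (x \<bullet> (D *v x)))"
    unfolding quad_eq
    by (intro Bochner_Integration.integrable_sum integrable_mult_right
        integrable_gauss_density_moment[OF K])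
  have K_sym: "K$j$i = K$i$j" for i j
    using K unfolding posdef_def by (metis transpose_def vec_lambda_beta)
  have "(\<integral>x. gauss_density K x * (x \<bullet> (D *v x)) \<partial>lborel) = (\<Sum>i\<in>UNIV. \<Sum>j\<in>UNIV. D$i$j * K$i$j)"
    unfolding quad_eq
    by (simp add: Bochner_Integration.integral_sum Bochner_Integration.integrable_sum
        integrable_mult_right integrable_gauss_density_moment[OF K] integral_gauss_density_moment[OF K])
  also have "\<dots> = trace (D ** K)"
    by (simp add: trace_def matrix_matrix_mult_def K_sym)
  finally show "(\<integral>x. gauss_density K x * (x \<bullet> (D *v x)) \<partial>lborel) = trace (D ** K)" .
qed

lemma
  fixes K D :: "real^'n^'n"
  assumes K: "posdef K"
  shows integrable_ent_integrand_gauss_density: "integrable lborel (ent_integrand D (gauss_density K))"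
    and ent_term_gauss_density: "2 * ent_term D (gauss_density K) =
      - trace (D ** K) + CARD('n) + ln ((2 * pi) ^ CARD('n)) + ln (det K)"
proof -
  let ?c = "(2 * pi) ^ CARD('n) * det K"
  have det_K: "0 < det K"
    by (rule posdef_det_pos[OF K])
  then have ln_eq: "ln (gauss_density K x) = - (x \<bullet> (matrix_inv K *v x)) / 2 - ln ?c / 2" for x
    by (simp add: gauss_density_def ln_div ln_sqrt)
  have integrand_eq: "ent_integrand D (gauss_density K) x =
      (-1/2) * (gauss_density K x * (x \<bullet> (D *v x)))
      + (1/2) * (gauss_density K x * (x \<bullet> (matrix_inv K *v x)))
      + (ln ?c / 2) * gauss_density K x" for x
    unfolding ent_integrand_def ln_eq by (simp add: algebra_simps)
  note integrable =
    integrable_gauss_density_quadratic[OF K, of D]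
    integrable_gauss_density_quadratic[OF K, of "matrix_inv K"]
    integrable_gauss_density[OF K]
  show "integrable lborel (ent_integrand D (gauss_density K))"
    unfolding integrand_eq[abs_def] using integrable
    by (intro Bochner_Integration.integrable_add integrable_mult_right) auto
  have "trace (matrix_inv K ** K) = CARD('n)"
    using det_K by (simp add: matrix_inv_inverse trace_I)
  then have "ent_term D (gauss_density K) = (-1/2) * trace (D ** K) + (1/2) * CARD('n) + ln ?c / 2"
    unfolding ent_term_def integrand_eq[abs_def] using integrable
    by (simp add: integral_gauss_density_quadratic[OF K] integral_gauss_density[OF K])
  then show "2 * ent_term D (gauss_density K) =
      - trace (D ** K) + CARD('n) + ln ((2 * pi) ^ CARD('n)) + ln (det K)"
    using det_K by (simp add: ln_mult)
qed

section \<open>Problem (P) at Gaussian marginals\<close>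

lemma (in pair_sigma_finite)
  fixes a :: "'a \<Rightarrow> real" and b :: "'b \<Rightarrow> real"
  assumes a: "integrable M1 a" and b: "integrable M2 b"
  shows integrable_pair_mult: "integrable (M1 \<Otimes>\<^sub>M M2) (\<lambda>(x, y). a x * b y)"
    and integral_pair_mult:
      "integral\<^sup>L (M1 \<Otimes>\<^sub>M M2) (\<lambda>(x, y). a x * b y) = integral\<^sup>L M1 a * integral\<^sup>L M2 b"
proof -
  have "(\<lambda>(x, y). a x * b y) \<in> borel_measurable (M1 \<Otimes>\<^sub>M M2)"
    using a b by measurable
  moreover have "integrable M1 (\<lambda>x. \<integral>y. norm (a x * b y) \<partial>M2)"
    using a by (simp add: abs_mult integrable_abs integrable_mult_left)
  ultimately show int: "integrable (M1 \<Otimes>\<^sub>M M2) (\<lambda>(x, y). a x * b y)"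
    using b by (intro Fubini_integrable) auto
  have "integral\<^sup>L (M1 \<Otimes>\<^sub>M M2) (\<lambda>(x, y). a x * b y) = (\<integral>x. (\<integral>y. a x * b y \<partial>M2) \<partial>M1)"
    using integral_fst'[OF int] by simp
  then show "integral\<^sup>L (M1 \<Otimes>\<^sub>M M2) (\<lambda>(x, y). a x * b y) = integral\<^sup>L M1 a * integral\<^sup>L M2 b"
    by simp
qed

lemma
  fixes KU KV DU DV :: "real^'n^'n"
  assumes KU: "posdef KU" and KV: "posdef KV" and sum: "KU + KV = mat 1"
  defines "g \<equiv> \<lambda>(u, v). gauss_density KU u * gauss_density KV v"
  shows margU_gauss_product: "margU g = gauss_density KU"
    and margV_gauss_product: "margV g = gauss_density KV"
    and P_feasible_gauss_product: "P_feasible DU DV g"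
proof -
  note pair_mult = lborel_pair.integrable_pair_mult lborel_pair.integral_pair_mult
  show margU: "margU g = gauss_density KU"
    by (simp add: margU_def g_def fun_eq_iff integral_gauss_density[OF KV])
  show margV: "margV g = gauss_density KV"
    by (simp add: margV_def g_def fun_eq_iff integral_gauss_density[OF KU])
  have g_int: "integrable lborel g" and "integral\<^sup>L lborel g = 1"
    using pair_mult[OF integrable_gauss_density[OF KU] integrable_gauss_density[OF KV]]
    by (simp_all add: g_def lborel_prod integral_gauss_density KU KV)
  moreover have "\<forall>z. 0 \<le> g z"
    using gauss_density_nonneg[OF KU] gauss_density_nonneg[OF KV] by (auto simp: g_def)
  moreover have
    "integrable lborel (\<lambda>(u, v). g (u, v) * (u$i * u$j + v$i * v$j)) \<and>
     (\<integral>(u, v). g (u, v) * (u$i * u$j + v$i * v$j) \<partial>lborel) = (if i = j then 1 else 0)" for i j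
  proof -
    let ?U = "\<lambda>(u, v). (gauss_density KU u * (u$i * u$j)) * gauss_density KV v"
    let ?V = "\<lambda>(u, v). gauss_density KU u * (gauss_density KV v * (v$i * v$j))"
    have split: "(\<lambda>(u, v). g (u, v) * (u$i * u$j + v$i * v$j)) = (\<lambda>z. ?U z + ?V z)"
      by (auto simp: g_def fun_eq_iff algebra_simps)
    have "integrable lborel ?U" "integral\<^sup>L lborel ?U = KU$i$j"
      using pair_mult[OF integrable_gauss_density_moment[OF KU] integrable_gauss_density[OF KV]]
      by (simp_all add: lborel_prod integral_gauss_density_moment KU integral_gauss_density KV)
    moreover have "integrable lborel ?V" "integral\<^sup>L lborel ?V = KV$i$j"
      using pair_mult[OF integrable_gauss_density[OF KU] integrable_gauss_density_moment[OF KV]]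
      by (simp_all add: lborel_prod integral_gauss_density_moment KV integral_gauss_density KU)
    moreover have "KU$i$j + KV$i$j = (if i = j then 1 else 0)"
      using arg_cong[OF sum, of "\<lambda>M. M$i$j"] by (simp add: mat_def)
    ultimately show ?thesis
      unfolding split by simp
  qed
  ultimately show "P_feasible DU DV g"
    unfolding P_feasible_def margU margV using g_int
    by (simp add: integrable_ent_integrand_gauss_density KU KV borel_measurable_integrable)
qed

lemma ent_term_cong_AE:
  assumes "ent_integrand D q \<in> borel_measurable lborel"
    and "ent_integrand D q' \<in> borel_measurable lborel"
    and "AE u in lborel. q u = q' u"
  shows "ent_term D q = ent_term D q'"
  unfolding ent_term_def using assms
  by (intro integral_cong_AE) (auto elim!: eventually_mono simp: ent_integrand_def)

lemma P_obj_gauss_marginals: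
  fixes f :: "(real^'n) \<times> (real^'n) \<Rightarrow> real"
  assumes KU: "posdef KU" and KV: "posdef KV" and f: "P_feasible DU DV f"
    and "AE u in lborel. margU f u = gauss_density KU u"
    and "AE v in lborel. margV f v = gauss_density KV v"
  shows "2 * P_obj lam DU DV f =
    K_obj lam DU DV KU KV + (1 + lam) * (CARD('n) + ln ((2 * pi) ^ CARD('n)))"
proof -
  have "ent_term DU (margU f) = ent_term DU (gauss_density KU)"
    using f assms(4) integrable_ent_integrand_gauss_density[OF KU]
    by (intro ent_term_cong_AE) (auto simp: P_feasible_def)
  moreover have "ent_term DV (margV f) = ent_term DV (gauss_density KV)"
    using f assms(5) integrable_ent_integrand_gauss_density[OF KV]
    by (intro ent_term_cong_AE) (auto simp: P_feasible_def)
  ultimately have "2 * P_obj lam DU DV f =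
      2 * ent_term DU (gauss_density KU) + lam * (2 * ent_term DV (gauss_density KV))"
    by (simp add: P_obj_def)
  then show ?thesis
    unfolding ent_term_gauss_density[OF KU] ent_term_gauss_density[OF KV] K_obj_def
    by (simp add: algebra_simps)
qed

theorem theorem4:
  fixes lam :: real
    and KU0 KV0 S1 S2 A B W1 W2 DU DV KU KV :: "real^'n^'n"
    and f :: "(real^'n) \<times> (real^'n) \<Rightarrow> real"
  assumes lam: "lam > 1"
    and pd0: "posdef KU0" "posdef KV0" "posdef S1" "posdef S2"
    and sum0: "KU0 + KV0 = mat 1"
    and A_def: "A = KV0 ** matrix_inv (mat 1 + S2)"
    and W1_def: "W1 = KV0 - KV0 ** matrix_inv (mat 1 + S2) ** KV0"
    and B_def: "B = KU0 ** matrix_inv (KU0 + S1)"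
    and W2_def: "W2 = KU0 - KU0 ** matrix_inv (KU0 + S1) ** KU0"
    and DU_def: "DU = matrix_inv W2 - matrix_inv W2 ** B - transpose B ** matrix_inv W2
                      + transpose B ** matrix_inv W2 ** B"
    and DV_def: "DV = matrix_inv W1 - transpose A ** matrix_inv W1 - matrix_inv W1 ** A"
    and feas: "P_feasible DU DV f"
    and opt: "\<And>g. P_feasible DU DV g \<Longrightarrow> P_obj lam DU DV g \<le> P_obj lam DU DV f"
    and pdK: "posdef KU" "posdef KV"
    and sumK: "KU + KV = mat 1"
    and margU_gauss: "AE u in lborel. margU f u = gauss_density KU u"
    and margV_gauss: "AE v in lborel. margV f v = gauss_density KV v"
  shows "\<forall>KU' KV'. posdef KU' \<and> posdef KV' \<and> KU' + KV' = mat 1 \<longrightarrow>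
           K_obj lam DU DV KU' KV' \<le> K_obj lam DU DV KU KV"
proof (intro allI impI, elim conjE)
  fix KU' KV' :: "real^'n^'n"
  assume KU': "posdef KU'" and KV': "posdef KV'" and sum': "KU' + KV' = mat 1"
  let ?g = "\<lambda>(u, v). gauss_density KU' u * gauss_density KV' v"
  have g: "P_feasible DU DV ?g" "margU ?g = gauss_density KU'" "margV ?g = gauss_density KV'"
    using P_feasible_gauss_product[OF KU' KV' sum'] margU_gauss_product[OF KU' KV' sum']
      margV_gauss_product[OF KU' KV' sum'] by auto
  have "P_obj lam DU DV ?g \<le> P_obj lam DU DV f"
    by (rule opt[OF g(1)])
  moreover have "2 * P_obj lam DU DV ?g =
      K_obj lam DU DV KU' KV' + (1 + lam) * (CARD('n) + ln ((2 * pi) ^ CARD('n)))"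
    using P_obj_gauss_marginals[OF KU' KV' g(1)] g(2,3) by simp
  moreover have "2 * P_obj lam DU DV f =
      K_obj lam DU DV KU KV + (1 + lam) * (CARD('n) + ln ((2 * pi) ^ CARD('n)))"
    by (rule P_obj_gauss_marginals[OF pdK feas margU_gauss margV_gauss])
  ultimately show "K_obj lam DU DV KU' KV' \<le> K_obj lam DU DV KU KV"
    by linarith
qed

end
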